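(* Let $\mathcal{H}$ be a $k$-conformal hypergraph on vertex set $V$ (with $k\le|V|$). If $E\in\mathrm{ext}_k(\mathcal{H})$, then there exists $F\in\mathcal{H}$ with $E\subseteq F$.
   Context: $\mathcal{H}$ is $k$-conformal if every inclusion-minimal subset of $V$ that is not contained in any hyperedge of $\mathcal{H}$ has size at most $k$. A $k$-trace on $V$ is a pair $(T,S)$ with $S\subseteq V$, $|S|=k$, $T\subseteq S$; $F$ realizes it if $F\cap S=T$. $\mathrm{traces}_k(\mathcal{H})$ is the set of $k$-traces realized by hyperedges of $\mathcal{H}$, and $\mathrm{ext}_k(\mathcal{H})$ is the hypergraph on $V$ of all $E\subseteq V$ such that every $k$-trace realized by $E$ lies in $\mathrm{traces}_k(\mathcal{H})$. *)

theory Defs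
  imports Main
begin

definition hypergraph :: "'a set \<Rightarrow> 'a set set \<Rightarrow> bool" where
  "hypergraph V H \<longleftrightarrow> (\<forall>F\<in>H. F \<subseteq> V)"

definition covered :: "'a set set \<Rightarrow> 'a set \<Rightarrow> bool" where
  "covered H X \<longleftrightarrow> (\<exists>F\<in>H. X \<subseteq> F)"

definition k_conformal :: "'a set \<Rightarrow> 'a set set \<Rightarrow> nat \<Rightarrow> bool" where
  "k_conformal V H k \<longleftrightarrow>
     (\<forall>X. X \<subseteq> V \<and> \<not> covered H X \<and> (\<forall>Y. Y \<subset> X \<longrightarrow> covered H Y) \<longrightarrow> card X \<le> k)"

definition k_trace :: "'a set \<Rightarrow> nat \<Rightarrow> 'a set \<times> 'a set \<Rightarrow> bool" where
  "k_trace V k TS \<longleftrightarrow> (case TS of (T, S) \<Rightarrow> S \<subseteq> V \<and> card S = k \<and> T \<subseteq> S)"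

definition realizes :: "'a set \<Rightarrow> 'a set \<times> 'a set \<Rightarrow> bool" where
  "realizes F TS \<longleftrightarrow> (case TS of (T, S) \<Rightarrow> F \<inter> S = T)"

definition traces_k :: "'a set \<Rightarrow> nat \<Rightarrow> 'a set set \<Rightarrow> ('a set \<times> 'a set) set" where
  "traces_k V k H = {TS. k_trace V k TS \<and> (\<exists>F\<in>H. realizes F TS)}"

definition ext_k :: "'a set \<Rightarrow> nat \<Rightarrow> 'a set set \<Rightarrow> 'a set set" where
  "ext_k V k H = {E. E \<subseteq> V \<and> (\<forall>TS. k_trace V k TS \<and> realizes E TS \<longrightarrow> TS \<in> traces_k V k H)}"

end

theory Submission
  imports Defs
begin

(* If E were not covered, it would contain an inclusion-minimal uncovered set X, and
   conformality bounds card X by k. Enlarging X inside V to a k-set S, the trace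
   (E \<inter> S, S) of E must be realized by some hyperedge F; then F \<inter> S = E \<inter> S contains X,
   so X is covered after all. *)

lemma uncovered_has_minimal_uncovered_subset:
  assumes "finite E" and "\<not> covered H E"
  shows "\<exists>X \<subseteq> E. \<not> covered H X \<and> (\<forall>Y. Y \<subset> X \<longrightarrow> covered H Y)"
  using assms
proof (induction E rule: finite_psubset_induct)
  case (psubset E)
  show ?case
  proof (cases "\<forall>Y. Y \<subset> E \<longrightarrow> covered H Y")
    case True
    with psubset.prems show ?thesis by auto
  next
    case False
    then obtain Y where "Y \<subset> E" and "\<not> covered H Y" by auto
    then obtain X where "X \<subseteq> Y" "\<not> covered H X" "\<forall>Z. Z \<subset> X \<longrightarrow> covered H Z"
      using psubset.IH[OF \<open>Y \<subset> E\<close> \<open>\<not> covered H Y\<close>] by auto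
    then show ?thesis
      using \<open>Y \<subset> E\<close> by (meson order.trans psubset_imp_subset)
  qed
qed

lemma ext_k_subset_covered:
  assumes "finite V" and "k \<le> card V" and "E \<in> ext_k V k H"
    and "X \<subseteq> E" and "card X \<le> k"
  shows "covered H X"
proof -
  have "X \<subseteq> V" using assms(3,4) by (auto simp: ext_k_def)
  then obtain S where "X \<subseteq> S" and "S \<subseteq> V" and "card S = k"
    using exists_subset_between[OF assms(5,2) _ assms(1)] by blast
  then have "(E \<inter> S, S) \<in> traces_k V k H"
    using assms(3) by (simp add: ext_k_def k_trace_def realizes_def)
  then obtain F where "F \<in> H" and "F \<inter> S = E \<inter> S"
    by (auto simp: traces_k_def realizes_def)
  then show ?thesis
    using \<open>X \<subseteq> S\<close> assms(4) by (auto simp: covered_def)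
qed

theorem proposition2:
  fixes V :: "'a set" and H :: "'a set set" and k :: nat and E :: "'a set"
  assumes "finite V"
    and "hypergraph V H"
    and "k_conformal V H k"
    and "k \<le> card V"
    and "E \<in> ext_k V k H"
  shows "\<exists>F\<in>H. E \<subseteq> F"
proof (rule ccontr)
  assume "\<not> (\<exists>F\<in>H. E \<subseteq> F)"
  then have "\<not> covered H E" by (simp add: covered_def)
  have "E \<subseteq> V" using assms(5) by (simp add: ext_k_def)
  then have "finite E" using assms(1) by (rule finite_subset)
  obtain X where "X \<subseteq> E" and "\<not> covered H X"
    and minimal: "\<forall>Y. Y \<subset> X \<longrightarrow> covered H Y"
    using uncovered_has_minimal_uncovered_subset[OF \<open>finite E\<close> \<open>\<not> covered H E\<close>] by auto
  have "card X \<le> k"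
    using assms(3) \<open>X \<subseteq> E\<close> \<open>E \<subseteq> V\<close> \<open>\<not> covered H X\<close> minimal
    by (auto simp: k_conformal_def)
  then have "covered H X"
    using ext_k_subset_covered[OF assms(1,4,5) \<open>X \<subseteq> E\<close>] by blast
  with \<open>\<not> covered H X\<close> show False by contradiction
qed

end
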